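(* Let $(N,v)$ be a balanced game. If the core $C(N,v)$ is a stable set, then the collection $\mathscr{VE}(N,v)$ of strictly vital-exact coalitions is core-describing, i.e., $$C(N,v)=\{x\in X(N,v)\mid x(S)\ge v(S)\ \forall S\in\mathscr{VE}(N,v)\}.$$
   Context: A game $(N,v)$: $N$ finite nonempty, $v:2^N\to\mathbb{R}$, $v(\varnothing)=0$; $x(S)=\sum_{i\in S}x_i$. Preimputations $X(N,v)=\{x\in\mathbb{R}^N\mid x(N)=v(N)\}$; imputations $I(N,v)=\{x\in X(N,v)\mid x_i\ge v(\{i\})\ \forall i\in N\}$. Core: $C(N,v)=\{x\in X(N,v)\mid x(S)\ge v(S)\ \forall S\subseteq N\}$; balanced means nonempty core. For preimputations $x,y$ and a coalition $S$, $x$ dominates $y$ via $S$ if $x(S)\le v(S)$ and $x_i>y_i$ for all $i\in S$; $x$ dominates $y$ if this holds for some coalition $S$. A set $U\subseteq I(N,v)$ is a stable set if (i) no element of $U$ is dominated by an element of $U$, and (ii) every $y\in I(N,v)\setminus U$ is dominated by some $x\in U$. A coalition $S$ is strictly vital-exact if there exists $x\in C(N,v)$ with $x(S)=v(S)$ and $x(T)>v(T)$ for all $T\in 2^S\setminus\{\varnothing,S\}$. *)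

theory Defs
  imports Complex_Main
begin

text \<open>A TU game on the finite nonempty player set N with characteristic function v
  (only values on subsets of N matter; v {} = 0 is an assumption).
  Payoff vectors are functions 'a => real; only their values on N matter.\<close>

definition coal_sum :: "('a \<Rightarrow> real) \<Rightarrow> 'a set \<Rightarrow> real" where
  "coal_sum x S = (\<Sum>i\<in>S. x i)"

definition preimputations :: "'a set \<Rightarrow> ('a set \<Rightarrow> real) \<Rightarrow> ('a \<Rightarrow> real) set" where
  "preimputations N v = {x. coal_sum x N = v N}"

definition imputations :: "'a set \<Rightarrow> ('a set \<Rightarrow> real) \<Rightarrow> ('a \<Rightarrow> real) set" where
  "imputations N v = {x \<in> preimputations N v. \<forall>i\<in>N. x i \<ge> v {i}}"

definition core :: "'a set \<Rightarrow> ('a set \<Rightarrow> real) \<Rightarrow> ('a \<Rightarrow> real) set" where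
  "core N v = {x \<in> preimputations N v. \<forall>S. S \<subseteq> N \<longrightarrow> coal_sum x S \<ge> v S}"

definition balanced :: "'a set \<Rightarrow> ('a set \<Rightarrow> real) \<Rightarrow> bool" where
  "balanced N v \<longleftrightarrow> core N v \<noteq> {}"

definition dominates_via ::
  "'a set \<Rightarrow> ('a set \<Rightarrow> real) \<Rightarrow> ('a \<Rightarrow> real) \<Rightarrow> ('a \<Rightarrow> real) \<Rightarrow> 'a set \<Rightarrow> bool" where
  "dominates_via N v x y S \<longleftrightarrow> coal_sum x S \<le> v S \<and> (\<forall>i\<in>S. x i > y i)"

definition dominates ::
  "'a set \<Rightarrow> ('a set \<Rightarrow> real) \<Rightarrow> ('a \<Rightarrow> real) \<Rightarrow> ('a \<Rightarrow> real) \<Rightarrow> bool" where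
  "dominates N v x y \<longleftrightarrow> (\<exists>S. S \<subseteq> N \<and> S \<noteq> {} \<and> dominates_via N v x y S)"

definition stable_set :: "'a set \<Rightarrow> ('a set \<Rightarrow> real) \<Rightarrow> ('a \<Rightarrow> real) set \<Rightarrow> bool" where
  "stable_set N v U \<longleftrightarrow> U \<subseteq> imputations N v
     \<and> (\<forall>x\<in>U. \<forall>y\<in>U. \<not> dominates N v x y)
     \<and> (\<forall>y \<in> imputations N v - U. \<exists>x\<in>U. dominates N v x y)"

definition strictly_vital_exact :: "'a set \<Rightarrow> ('a set \<Rightarrow> real) \<Rightarrow> 'a set \<Rightarrow> bool" where
  "strictly_vital_exact N v S \<longleftrightarrow> S \<subseteq> N \<and>
     (\<exists>x\<in>core N v. coal_sum x S = v S \<and>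
        (\<forall>T. T \<subseteq> S \<and> T \<noteq> {} \<and> T \<noteq> S \<longrightarrow> coal_sum x T > v T))"

definition VE :: "'a set \<Rightarrow> ('a set \<Rightarrow> real) \<Rightarrow> 'a set set" where
  "VE N v = {S. strictly_vital_exact N v S}"

end

theory Submission
  imports Defs "HOL-Analysis.Elementary_Metric_Spaces"
begin

text \<open>Suppose y satisfies every strictly vital-exact constraint but lies outside the core, and
  pick z in the core. Walking from z towards y, let s be the last parameter at which the point
  is still in the core. Singleton constraints that y violates are slack at s, for otherwise the
  singleton would be strictly vital-exact; so slightly beyond s the point is an imputation
  outside the core. Stability lets a core element x dominate it via some coalition, and a
  minimal coalition inside it on which x is not strictly above v is strictly vital-exact, hence
  violated by our point. But the point is a convex combination of z and y, both of which
  satisfy that constraint.\<close>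

definition convex_mix :: "('a \<Rightarrow> real) \<Rightarrow> ('a \<Rightarrow> real) \<Rightarrow> real \<Rightarrow> 'a \<Rightarrow> real" where
  "convex_mix z y t = (\<lambda>i. (1 - t) * z i + t * y i)"

lemma coal_sum_convex_mix:
  "coal_sum (convex_mix z y t) S = (1 - t) * coal_sum z S + t * coal_sum y S"
  unfolding coal_sum_def convex_mix_def by (simp add: sum.distrib sum_distrib_left)

lemma coal_sum_singleton [simp]: "coal_sum x {i} = x i"
  unfolding coal_sum_def by simp

lemma core_coal_sum_ge: "x \<in> core N v \<Longrightarrow> S \<subseteq> N \<Longrightarrow> v S \<le> coal_sum x S"
  by (simp add: core_def)

lemma core_individually_rational: "x \<in> core N v \<Longrightarrow> i \<in> N \<Longrightarrow> v {i} \<le> x i"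
  using core_coal_sum_ge[of x N v "{i}"] by simp

lemma convex_combination_ge:
  fixes a b c t :: real
  assumes "c \<le> a" "c \<le> b" "0 \<le> t" "t \<le> 1"
  shows "c \<le> (1 - t) * a + t * b"
  using convex_bound_le[of "-a" "-c" "-b" "1 - t" t] assms by simp

lemma convex_mix_preimputation:
  assumes "z \<in> preimputations N v" "y \<in> preimputations N v"
  shows "convex_mix z y t \<in> preimputations N v"
  using assms unfolding preimputations_def
  by (simp add: coal_sum_convex_mix algebra_simps)

lemma closed_core_segment:
  assumes "z \<in> preimputations N v" "y \<in> preimputations N v"
  shows "closed {t. convex_mix z y t \<in> core N v}"
proof -
  have "{t. convex_mix z y t \<in> core N v}
      = (\<Inter>S\<in>Pow N. {t. v S \<le> (1 - t) * coal_sum z S + t * coal_sum y S})"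
    using convex_mix_preimputation[OF assms]
    by (auto simp: core_def coal_sum_convex_mix)
  moreover have "closed {t. v S \<le> (1 - t) * coal_sum z S + t * coal_sum y S}" for S
    by (intro closed_Collect_le continuous_intros)
  ultimately show ?thesis by auto
qed

lemma last_core_point_on_segment:
  assumes "z \<in> core N v" "y \<in> preimputations N v" "y \<notin> core N v"
  obtains s where "0 \<le> s" "s < 1" "convex_mix z y s \<in> core N v"
    "\<And>t. s < t \<Longrightarrow> t \<le> 1 \<Longrightarrow> convex_mix z y t \<notin> core N v"
proof -
  have z: "z \<in> preimputations N v" using assms(1) by (simp add: core_def)
  define A where "A = {0..1} \<inter> {t. convex_mix z y t \<in> core N v}"
  have "convex_mix z y 0 = z" "convex_mix z y 1 = y" by (simp_all add: convex_mix_def)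
  then have "0 \<in> A" "1 \<notin> A" using assms by (simp_all add: A_def)
  moreover have bdd: "bdd_above A" by (auto simp: A_def intro: bdd_aboveI[of _ 1])
  moreover have "closed A"
    unfolding A_def using closed_core_segment[OF z assms(2)] by (intro closed_Int) simp_all
  ultimately have "Sup A \<in> A" by (intro closed_contains_Sup) auto
  moreover have "t \<notin> A" if "Sup A < t" for t
    using cSup_upper[OF _ bdd, of t] that by fastforce
  ultimately show ?thesis
    using that[of "Sup A"] \<open>1 \<notin> A\<close> by (fastforce simp: A_def)
qed

lemma core_singleton_strictly_vital_exact:
  assumes "x \<in> core N v" "i \<in> N" "x i = v {i}"
  shows "{i} \<in> VE N v"
proof -
  have "\<forall>T. T \<subseteq> {i} \<and> T \<noteq> {} \<and> T \<noteq> {i} \<longrightarrow> v T < coal_sum x T"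
    using subset_singletonD by blast
  then show ?thesis using assms unfolding VE_def strictly_vital_exact_def by auto
qed

lemma exists_minimal_blocking_coalition:
  assumes "finite S" "S \<noteq> {}" "coal_sum x S \<le> v S"
  obtains T where "T \<subseteq> S" "T \<noteq> {}" "coal_sum x T \<le> v T"
    "\<And>T'. T' \<subset> T \<Longrightarrow> T' \<noteq> {} \<Longrightarrow> v T' < coal_sum x T'"
proof -
  define B where "B = {T. T \<subseteq> S \<and> T \<noteq> {} \<and> coal_sum x T \<le> v T}"
  have "finite B" using assms(1) by (simp add: B_def)
  moreover have "B \<noteq> {}" using assms by (auto simp: B_def)
  ultimately obtain T where T: "T \<in> B" and minimal: "\<And>T'. T' \<in> B \<Longrightarrow> T' \<le> T \<Longrightarrow> T = T'"
    using finite_has_minimal by metis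
  have "v T' < coal_sum x T'" if "T' \<subset> T" "T' \<noteq> {}" for T'
  proof (rule ccontr)
    assume "\<not> v T' < coal_sum x T'"
    then have "T' \<in> B" using T that by (auto simp: B_def)
    then show False using minimal that by blast
  qed
  then show ?thesis using that T by (auto simp: B_def)
qed

lemma dominated_by_core_violates_VE:
  assumes "finite N" "x \<in> core N v" "dominates N v x u"
  obtains T where "T \<in> VE N v" "coal_sum u T < v T"
proof -
  obtain S where S: "S \<subseteq> N" "S \<noteq> {}" "coal_sum x S \<le> v S" "\<forall>i\<in>S. u i < x i"
    using assms(3) unfolding dominates_def dominates_via_def by blast
  have "finite S" using S(1) assms(1) finite_subset by blast
  then obtain T where T: "T \<subseteq> S" "T \<noteq> {}" "coal_sum x T \<le> v T"
    "\<And>T'. T' \<subset> T \<Longrightarrow> T' \<noteq> {} \<Longrightarrow> v T' < coal_sum x T'"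
    using exists_minimal_blocking_coalition S(2,3) by metis
  have "v T \<le> coal_sum x T" using core_coal_sum_ge[OF assms(2)] T(1) S(1) by blast
  then have exact: "coal_sum x T = v T" using T(3) by simp
  then have "T \<in> VE N v"
    using T S(1) assms(2) unfolding VE_def strictly_vital_exact_def by blast
  moreover have "coal_sum u T < coal_sum x T"
    unfolding coal_sum_def using T(1,2) S(4) \<open>finite S\<close>
    by (intro sum_strict_mono) (auto intro: finite_subset)
  ultimately show ?thesis using that exact by simp
qed

lemma imputation_outside_core_on_segment:
  assumes "finite N" "z \<in> core N v" "y \<in> preimputations N v" "y \<notin> core N v"
    and VE_y: "\<forall>S\<in>VE N v. v S \<le> coal_sum y S"
  obtains t where "0 \<le> t" "t \<le> 1" "convex_mix z y t \<in> imputations N v - core N v"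
proof -
  obtain s where s: "0 \<le> s" "s < 1" "convex_mix z y s \<in> core N v"
    "\<And>t. s < t \<Longrightarrow> t \<le> 1 \<Longrightarrow> convex_mix z y t \<notin> core N v"
    using last_core_point_on_segment assms(2-4) by blast
  define I where "I = {i \<in> N. y i < v {i}}"
  have slack: "v {i} < convex_mix z y s i" if "i \<in> I" for i
  proof -
    have "i \<in> N" "y i < v {i}" using that by (auto simp: I_def)
    then have "{i} \<notin> VE N v" using VE_y by fastforce
    then have "convex_mix z y s i \<noteq> v {i}"
      using core_singleton_strictly_vital_exact[OF s(3) \<open>i \<in> N\<close>] by blast
    moreover have "v {i} \<le> convex_mix z y s i"
      using core_individually_rational[OF s(3) \<open>i \<in> N\<close>] .
    ultimately show ?thesis by simp
  qed
  have "\<forall>i\<in>I. \<forall>\<^sub>F t in at_right s. v {i} < convex_mix z y t i"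
  proof
    fix i assume "i \<in> I"
    have "((\<lambda>t. convex_mix z y t i) \<longlongrightarrow> convex_mix z y s i) (at_right s)"
      unfolding convex_mix_def by (intro tendsto_intros)
    then show "\<forall>\<^sub>F t in at_right s. v {i} < convex_mix z y t i"
      using slack[OF \<open>i \<in> I\<close>] by (rule order_tendstoD)
  qed
  then have "\<forall>\<^sub>F t in at_right s. \<forall>i\<in>I. v {i} < convex_mix z y t i"
    using assms(1) by (intro eventually_ball_finite) (simp_all add: I_def)
  moreover have "\<forall>\<^sub>F t in at_right s. t < 1"
    using order_tendstoD(2)[OF tendsto_ident_at s(2)] .
  ultimately have "\<forall>\<^sub>F t in at_right s. s < t \<and> t < 1 \<and> (\<forall>i\<in>I. v {i} < convex_mix z y t i)"
    using eventually_at_right_less[of s] by eventually_elim blast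
  then obtain t where t: "s < t" "t < 1" "\<forall>i\<in>I. v {i} < convex_mix z y t i"
    using eventually_happens'[OF trivial_limit_at_right_real] by blast
  have "v {i} \<le> convex_mix z y t i" if "i \<in> N" for i
  proof (cases "i \<in> I")
    case False
    then have "v {i} \<le> y i" using that by (simp add: I_def)
    moreover have "v {i} \<le> z i" using core_individually_rational[OF assms(2) that] .
    ultimately show ?thesis
      unfolding convex_mix_def using s(1) t(1,2) by (intro convex_combination_ge) simp_all
  qed (use t(3) in force)
  moreover have "convex_mix z y t \<in> preimputations N v"
    using assms(2,3) by (intro convex_mix_preimputation) (auto simp: core_def)
  ultimately have "convex_mix z y t \<in> imputations N v" by (simp add: imputations_def)
  then show ?thesis using that[of t] s t by simp
qed

theorem proposition7p2:
  fixes N :: "'a set" and v :: "'a set \<Rightarrow> real"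
  assumes "finite N" and "N \<noteq> {}" and "v {} = 0"
    and "balanced N v"
    and "stable_set N v (core N v)"
  shows "core N v = {x \<in> preimputations N v. \<forall>S\<in>VE N v. coal_sum x S \<ge> v S}"
proof (intro equalityI subsetI)
  fix y assume "y \<in> core N v"
  then show "y \<in> {x \<in> preimputations N v. \<forall>S\<in>VE N v. coal_sum x S \<ge> v S}"
    by (auto simp: core_def VE_def strictly_vital_exact_def)
next
  fix y assume y: "y \<in> {x \<in> preimputations N v. \<forall>S\<in>VE N v. coal_sum x S \<ge> v S}"
  obtain z where z: "z \<in> core N v" using assms(4) by (auto simp: balanced_def)
  show "y \<in> core N v"
  proof (rule ccontr)
    assume "y \<notin> core N v"
    then obtain t where t: "0 \<le> t" "t \<le> 1" "convex_mix z y t \<in> imputations N v - core N v"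
      using imputation_outside_core_on_segment[OF assms(1) z] y by blast
    then obtain x where "x \<in> core N v" "dominates N v x (convex_mix z y t)"
      using assms(5) unfolding stable_set_def by blast
    then obtain T where T: "T \<in> VE N v" "coal_sum (convex_mix z y t) T < v T"
      using dominated_by_core_violates_VE assms(1) by blast
    have "v T \<le> coal_sum z T"
      using core_coal_sum_ge[OF z] T(1) by (simp add: VE_def strictly_vital_exact_def)
    then have "v T \<le> coal_sum (convex_mix z y t) T"
      using y T(1) t(1,2) by (auto simp: coal_sum_convex_mix intro!: convex_combination_ge)
    then show False using T(2) by simp
  qed
qed

end
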